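(* Let $L$ be the signed Laplacian of a signed digraph and let $L_s=(L+L^\top)/2$. If $L_s$ is positive semidefinite of corank $1$, then $L$ is weight balanced (i.e. $L^\top\mathbf{1}=0$) and $-L$ is marginally stable of corank $1$.
   Context: A signed digraph has real weighted adjacency matrix $A\in\mathbb{R}^{n\times n}$ (entries of any sign). Its signed Laplacian is $L=\Sigma-A$ with $\Sigma=\mathrm{diag}(\sigma_1,\dots,\sigma_n)$, $\sigma_i=\sum_jA_{ij}$, so $L\mathbf{1}=0$. Weight balanced means $A\mathbf{1}=A^\top\mathbf{1}$, equivalently $L^\top\mathbf{1}=0$. $M$ is marginally stable if all eigenvalues have real part $\le 0$ and each eigenvalue with zero real part is a simple root of the minimal polynomial. Corank means dimension of the kernel. *)

theory Defs
  imports "Jordan_Normal_Form.Char_Poly" "Jordan_Normal_Form.Matrix_Kernel"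
begin

definition ones_vec :: "nat \<Rightarrow> 'a :: one vec" where
  "ones_vec n = vec n (\<lambda>_. 1)"

definition signed_laplacian :: "real mat \<Rightarrow> real mat" where
  "signed_laplacian A = mat (dim_row A) (dim_col A)
     (\<lambda>(i,j). (if i = j then (\<Sum>k<dim_col A. A $$ (i,k)) else 0) - A $$ (i,j))"

definition psd :: "real mat \<Rightarrow> bool" where
  "psd M \<longleftrightarrow> (\<forall>x \<in> carrier_vec (dim_col M). x \<bullet> (M *\<^sub>v x) \<ge> 0)"

definition corank :: "'a :: field mat \<Rightarrow> nat" where
  "corank M = kernel_dim M"

definition poly_mat :: "'a :: comm_ring_1 poly \<Rightarrow> 'a mat \<Rightarrow> 'a mat" where
  "poly_mat p M = foldr (\<lambda>c B. c \<cdot>\<^sub>m 1\<^sub>m (dim_row M) + M * B) (coeffs p)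
                        (0\<^sub>m (dim_row M) (dim_row M))"

definition minimal_poly :: "'a :: field mat \<Rightarrow> 'a poly" where
  "minimal_poly M = (THE p. monic p \<and> poly_mat p M = 0\<^sub>m (dim_row M) (dim_row M) \<and>
      (\<forall>q. q \<noteq> 0 \<longrightarrow> poly_mat q M = 0\<^sub>m (dim_row M) (dim_row M) \<longrightarrow> degree p \<le> degree q))"

definition marginally_stable :: "real mat \<Rightarrow> bool" where
  "marginally_stable M \<longleftrightarrow>
     (let Mc = map_mat complex_of_real M in
      (\<forall>z. eigenvalue Mc z \<longrightarrow> Re z \<le> 0) \<and>
      (\<forall>z. eigenvalue Mc z \<and> Re z = 0 \<longrightarrow> Polynomial.order z (minimal_poly Mc) = 1))"

end

theory Submission
  imports Defs
begin

text \<open>Since \<open>x \<bullet> L x = x \<bullet> L\<^sub>s x\<close> and \<open>L\<^sub>s\<close> is positive semidefinite, every isotropic vector of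
  \<open>L\<close> lies in the kernel of \<open>L\<^sub>s\<close>. As \<open>L \<one> = 0\<close>, this puts \<open>\<one>\<close> into \<open>ker L\<^sub>s\<close>, so that
  \<open>L\<^sup>T \<one> = 2 L\<^sub>s \<one> - L \<one> = 0\<close>, and corank one forces \<open>ker L\<^sub>s = span \<one> = ker L\<close>.
  If \<open>a + i b\<close> is a complex eigenvector of \<open>-L\<close> for \<open>z\<close>, then
  \<open>a \<bullet> L a + b \<bullet> L b = - Re z (\<bar>a\<bar>\<^sup>2 + \<bar>b\<bar>\<^sup>2)\<close>: hence \<open>Re z \<le> 0\<close>, and \<open>Re z = 0\<close> makes \<open>a\<close>
  and \<open>b\<close> isotropic, thus in \<open>ker L\<close>, thus \<open>z = 0\<close>. Finally, if \<open>L\<^sup>2 x = 0\<close>, the quadratic form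
  of \<open>L\<close> at \<open>L x + t x\<close> equals \<open>t \<bar>L x\<bar>\<^sup>2 + t\<^sup>2 (x \<bullet> L x) \<ge> 0\<close> for all real \<open>t\<close>, forcing \<open>L x = 0\<close>;
  so \<open>ker L\<^sup>2 = ker L\<close> and \<open>0\<close> is a simple root of the minimal polynomial of \<open>-L\<close>.\<close>

section \<open>Quadratic forms of real matrices\<close>

lemma linear_coeff_eq_0_if_nonneg:
  fixes b c :: real
  assumes nonneg: "\<And>t. 0 \<le> b * t + c * t\<^sup>2"
  shows "b = 0"
proof (rule ccontr)
  assume "b \<noteq> 0"
  define d where "d = \<bar>c\<bar> + 1"
  have d: "d > 0" "c - d < 0" unfolding d_def by auto
  have "b * (- b / d) + c * (- b / d)\<^sup>2 = b\<^sup>2 / d\<^sup>2 * (c - d)"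
    using d by (simp add: field_simps power2_eq_square)
  also have "\<dots> < 0"
    using \<open>b \<noteq> 0\<close> d by (intro mult_pos_neg) auto
  finally show False using nonneg[of "- b / d"] by simp
qed

lemma quadratic_form_add_smult:
  fixes P :: "real mat"
  assumes P: "P \<in> carrier_mat n n" and x: "x \<in> carrier_vec n" and y: "y \<in> carrier_vec n"
  shows "(x + t \<cdot>\<^sub>v y) \<bullet> (P *\<^sub>v (x + t \<cdot>\<^sub>v y)) =
    x \<bullet> (P *\<^sub>v x) + t * (x \<bullet> (P *\<^sub>v y) + y \<bullet> (P *\<^sub>v x)) + t\<^sup>2 * (y \<bullet> (P *\<^sub>v y))"
  using P x y
  by (simp add: mult_add_distrib_mat_vec[OF P] mult_mat_vec[OF P] add_scalar_prod_distrib[of _ n]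
      scalar_prod_add_distrib[of _ n] algebra_simps power2_eq_square)

lemma real_scalar_prod_self_eq_0_iff:
  fixes v :: "real vec"
  assumes "v \<in> carrier_vec n"
  shows "v \<bullet> v = 0 \<longleftrightarrow> v = 0\<^sub>v n"
  using conjugate_square_eq_0_vec[OF assms] by simp

lemma real_scalar_prod_self_nonneg: "0 \<le> (v :: real vec) \<bullet> v"
  using conjugate_square_ge_0_vec[of v] by simp

lemma psd_quadratic_form_nonneg:
  assumes "psd P" "P \<in> carrier_mat n n" "x \<in> carrier_vec n"
  shows "0 \<le> x \<bullet> (P *\<^sub>v x)"
  using assms unfolding psd_def by auto

lemma psd_mult_mat_vec_eq_0_if_square:
  fixes P :: "real mat"
  assumes P: "P \<in> carrier_mat n n" and "psd P" and x: "x \<in> carrier_vec n"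
    and sq: "P *\<^sub>v (P *\<^sub>v x) = 0\<^sub>v n"
  shows "P *\<^sub>v x = 0\<^sub>v n"
proof -
  define y where "y = P *\<^sub>v x"
  have y: "y \<in> carrier_vec n" and Py: "P *\<^sub>v y = 0\<^sub>v n" using P x sq by (auto simp: y_def)
  have "0 \<le> (y \<bullet> y) * t + (x \<bullet> (P *\<^sub>v x)) * t\<^sup>2" for t
    using psd_quadratic_form_nonneg[OF \<open>psd P\<close> P, of "y + t \<cdot>\<^sub>v x"] x y Py
      quadratic_form_add_smult[OF P y x, of t]
    by (simp add: y_def[symmetric] mult.commute)
  then have "y \<bullet> y = 0" by (rule linear_coeff_eq_0_if_nonneg)
  then show ?thesis using real_scalar_prod_self_eq_0_iff[OF y] by (simp add: y_def)
qed

lemma psd_symmetric_mult_mat_vec_eq_0: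
  fixes P :: "real mat"
  assumes P: "P \<in> carrier_mat n n" and "psd P" and sym: "transpose_mat P = P"
    and x: "x \<in> carrier_vec n" and iso: "x \<bullet> (P *\<^sub>v x) = 0"
  shows "P *\<^sub>v x = 0\<^sub>v n"
proof -
  define y where "y = P *\<^sub>v x"
  have y: "y \<in> carrier_vec n" using P x by (simp add: y_def)
  have "x \<bullet> (P *\<^sub>v y) = y \<bullet> y"
    using transpose_vec_mult_scalar[OF P y x] sym by (simp add: y_def)
  moreover have "y \<bullet> (P *\<^sub>v x) = y \<bullet> y" by (simp add: y_def)
  ultimately have "0 \<le> (2 * (y \<bullet> y)) * t + (y \<bullet> (P *\<^sub>v y)) * t\<^sup>2" for t
    using psd_quadratic_form_nonneg[OF \<open>psd P\<close> P, of "x + t \<cdot>\<^sub>v y"] x y iso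
      quadratic_form_add_smult[OF P x y, of t]
    by (simp add: mult.commute)
  then have "y \<bullet> y = 0" using linear_coeff_eq_0_if_nonneg by fastforce
  then show ?thesis using real_scalar_prod_self_eq_0_iff[OF y] by (simp add: y_def)
qed

section \<open>Kernels\<close>

lemma kernel_dim_1_imp_scalar_multiple:
  fixes S :: "'a::field mat"
  assumes S: "S \<in> carrier_mat n n" and dim: "kernel_dim S = 1"
    and u: "u \<in> mat_kernel S" "u \<noteq> 0\<^sub>v n" and x: "x \<in> mat_kernel S"
  shows "\<exists>c. x = c \<cdot>\<^sub>v u"
proof -
  interpret K: kernel n n S by unfold_locales (rule S)
  obtain B where "finite B" "K.basis B" using kernel_basis_exists[OF S] by auto
  then have fin_dim: "K.Ker.fin_dim" unfolding K.Ker.fin_dim_def K.Ker.basis_def by auto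
  have "u \<notin> K.span {}" using u unfolding K.Ker.span_def K.Ker.lincomb_def by auto
  then have "K.lin_indpt {u}" using K.Ker.lindep_span u(1) by auto
  then have "K.basis {u}" using K.Ker.dim_li_is_basis[OF fin_dim] u(1) dim by auto
  then have "x \<in> K.span {u}" using x unfolding K.Ker.basis_def by auto
  then obtain a where "x = K.lincomb a {u}" using K.Ker.finite_span u(1) by auto
  then have "x = a u \<cdot>\<^sub>v u" using u(1) by (simp add: K.Ker.module.lincomb_insert2)
  then show ?thesis by blast
qed

lemma kernel_dim_eq_if_mat_kernel_eq:
  assumes "A \<in> carrier_mat nr n" "B \<in> carrier_mat nr' n" "mat_kernel A = mat_kernel B"
  shows "kernel_dim A = kernel_dim B"
  using assms unfolding kernel_dim_def by simp

lemma mat_kernel_uminus: "A \<in> carrier_mat nr nc \<Longrightarrow> mat_kernel (- A) = mat_kernel (A :: 'a :: comm_ring_1 mat)"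
  by (auto simp: mat_kernel_def uminus_zero_vec_eq)

lemma kernel_dim_carrier_0: "A \<in> carrier_mat 0 0 \<Longrightarrow> kernel_dim A = 0"
  by (simp add: kernel_dim_code)

section \<open>The symmetric part of a matrix\<close>

definition symmetric_part :: "real mat \<Rightarrow> real mat" where
  "symmetric_part P = (1/2) \<cdot>\<^sub>m (P + transpose_mat P)"

lemma symmetric_part_carrier[simp]:
  "P \<in> carrier_mat n n \<Longrightarrow> symmetric_part P \<in> carrier_mat n n"
  unfolding symmetric_part_def by simp

lemma transpose_symmetric_part:
  "P \<in> carrier_mat n n \<Longrightarrow> transpose_mat (symmetric_part P) = symmetric_part P"
  unfolding symmetric_part_def by (rule eq_matI) auto

lemma symmetric_part_mult_mat_vec:
  assumes "P \<in> carrier_mat n n" "x \<in> carrier_vec n"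
  shows "symmetric_part P *\<^sub>v x = (1/2) \<cdot>\<^sub>v (P *\<^sub>v x + transpose_mat P *\<^sub>v x)"
  using assms unfolding symmetric_part_def
  by (intro eq_vecI) (auto simp: scalar_prod_add_distrib[of _ n] add_scalar_prod_distrib[of _ n])

lemma quadratic_form_symmetric_part:
  assumes P: "P \<in> carrier_mat n n" and x: "x \<in> carrier_vec n"
  shows "x \<bullet> (symmetric_part P *\<^sub>v x) = x \<bullet> (P *\<^sub>v x)"
proof -
  have "x \<bullet> (transpose_mat P *\<^sub>v x) = x \<bullet> (P *\<^sub>v x)"
    using transpose_vec_mult_scalar[of "transpose_mat P" n n x x] P x
    by (simp add: comm_scalar_prod[of _ n])
  then show ?thesis
    using P x by (simp add: symmetric_part_mult_mat_vec scalar_prod_add_distrib[of _ n])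
qed

lemma psd_symmetric_part_iff:
  "P \<in> carrier_mat n n \<Longrightarrow> psd (symmetric_part P) \<longleftrightarrow> psd P"
  unfolding psd_def using carrier_matD[OF symmetric_part_carrier]
  by (simp add: quadratic_form_symmetric_part)

context
  fixes P :: "real mat" and u :: "real vec" and n :: nat
  assumes P: "P \<in> carrier_mat n n"
    and u: "u \<in> carrier_vec n" "u \<noteq> 0\<^sub>v n" "P *\<^sub>v u = 0\<^sub>v n"
    and psd: "psd (symmetric_part P)"
    and corank: "kernel_dim (symmetric_part P) = 1"
begin

private lemma symmetric_part_dim[simp]:
  "dim_row (symmetric_part P) = n" "dim_col (symmetric_part P) = n"
  using symmetric_part_carrier[OF P] by auto

private lemma symmetric_part_isotropic_kernel:
  "x \<in> carrier_vec n \<Longrightarrow> x \<bullet> (P *\<^sub>v x) = 0 \<Longrightarrow> symmetric_part P *\<^sub>v x = 0\<^sub>v n"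
  using psd_symmetric_mult_mat_vec_eq_0[of "symmetric_part P" n] P psd
  by (simp add: transpose_symmetric_part quadratic_form_symmetric_part)

lemma mat_kernel_eq_mat_kernel_symmetric_part: "mat_kernel P = mat_kernel (symmetric_part P)"
proof (intro equalityI subsetI)
  fix x assume "x \<in> mat_kernel P"
  then show "x \<in> mat_kernel (symmetric_part P)"
    using P symmetric_part_isotropic_kernel by (auto simp: mat_kernel_def)
next
  fix x assume x: "x \<in> mat_kernel (symmetric_part P)"
  have "u \<in> mat_kernel (symmetric_part P)"
    using P u symmetric_part_isotropic_kernel by (auto simp: mat_kernel_def)
  then obtain c where "x = c \<cdot>\<^sub>v u"
    using kernel_dim_1_imp_scalar_multiple[OF _ corank _ u(2) x] P by auto
  then show "x \<in> mat_kernel P" using P u by (auto simp: mat_kernel_def mult_mat_vec)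
qed

lemma isotropic_imp_mult_mat_vec_eq_0:
  "x \<in> carrier_vec n \<Longrightarrow> x \<bullet> (P *\<^sub>v x) = 0 \<Longrightarrow> P *\<^sub>v x = 0\<^sub>v n"
  using symmetric_part_isotropic_kernel mat_kernel_eq_mat_kernel_symmetric_part P
  by (auto simp: mat_kernel_def)

lemma transpose_mult_mat_vec_eq_0: "transpose_mat P *\<^sub>v u = 0\<^sub>v n"
proof -
  have half: "(1/2) \<cdot>\<^sub>v (transpose_mat P *\<^sub>v u) = 0\<^sub>v n"
    using symmetric_part_isotropic_kernel[OF u(1)] symmetric_part_mult_mat_vec[OF P u(1)] P u
    by simp
  have "transpose_mat P *\<^sub>v u = 2 \<cdot>\<^sub>v ((1/2) \<cdot>\<^sub>v (transpose_mat P *\<^sub>v u))"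
    by (simp add: smult_smult_assoc)
  also have "\<dots> = 0\<^sub>v n" unfolding half by (intro eq_vecI) auto
  finally show ?thesis .
qed

end

section \<open>Polynomials evaluated at a matrix\<close>

lemma smult_one_mult_mat_vec:
  "v \<in> carrier_vec n \<Longrightarrow> (a \<cdot>\<^sub>m 1\<^sub>m n) *\<^sub>v v = (a :: 'a :: comm_ring_1) \<cdot>\<^sub>v v"
  by (intro eq_vecI) auto

lemma poly_mat_dim[simp]:
  "dim_row (poly_mat p M) = dim_row M" "dim_col (poly_mat p M) = dim_row M"
proof -
  have "dim_row (foldr (\<lambda>c B. c \<cdot>\<^sub>m 1\<^sub>m m + M * B) cs (0\<^sub>m m m)) = (if cs = [] then m else dim_row M) \<and>
        dim_col (foldr (\<lambda>c B. c \<cdot>\<^sub>m 1\<^sub>m m + M * B) cs (0\<^sub>m m m)) = m" for cs m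
    by (induct cs) auto
  then show "dim_row (poly_mat p M) = dim_row M" "dim_col (poly_mat p M) = dim_row M"
    unfolding poly_mat_def by auto
qed

lemma poly_mat_carrier[simp]: "M \<in> carrier_mat n n \<Longrightarrow> poly_mat p M \<in> carrier_mat n n"
  by (intro carrier_matI) auto

lemma poly_mat_0[simp]: "poly_mat 0 M = 0\<^sub>m (dim_row M) (dim_row M)"
  unfolding poly_mat_def by simp

lemma poly_mat_pCons:
  assumes M: "M \<in> carrier_mat n n"
  shows "poly_mat (pCons a p) M = a \<cdot>\<^sub>m 1\<^sub>m n + M * poly_mat p M"
  using M unfolding poly_mat_def by (cases "p = 0 \<and> a = 0") (auto simp: cCons_def)

lemma poly_mat_pCons_0:
  assumes M: "M \<in> carrier_mat n n"
  shows "poly_mat (pCons 0 p) M = M * poly_mat p M"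
  using M carrier_matD[OF poly_mat_carrier[OF M, of p]] by (intro eq_matI) (auto simp: poly_mat_pCons)

lemma poly_mat_add:
  assumes M: "M \<in> carrier_mat n n"
  shows "poly_mat (p + q) M = poly_mat p M + poly_mat q M"
proof (induct p arbitrary: q rule: pCons_induct)
  case 0
  then show ?case using M by simp
next
  case (pCons a p)
  obtain b q' where q: "q = pCons b q'" by (cases q) auto
  have P: "poly_mat p M \<in> carrier_mat n n" and Q: "poly_mat q' M \<in> carrier_mat n n"
    using M by auto
  have "poly_mat (pCons a p + q) M = (a + b) \<cdot>\<^sub>m 1\<^sub>m n + M * (poly_mat p M + poly_mat q' M)"
    using pCons M by (simp add: q poly_mat_pCons)
  also have "\<dots> = poly_mat (pCons a p) M + poly_mat q M"
    unfolding q poly_mat_pCons[OF M] mult_add_distrib_mat[OF M P Q]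
    by (rule eq_matI) (use M P Q in \<open>auto simp: algebra_simps carrier_matD[OF P] carrier_matD[OF Q]\<close>)
  finally show ?case .
qed

lemma poly_mat_smult:
  assumes M: "M \<in> carrier_mat n n"
  shows "poly_mat (Polynomial.smult c p) M = c \<cdot>\<^sub>m poly_mat p M"
proof (induct p rule: pCons_induct)
  case 0
  then show ?case using M by simp
next
  case (pCons a p)
  have P: "poly_mat p M \<in> carrier_mat n n" using M by auto
  show ?case unfolding smult_pCons poly_mat_pCons[OF M] pCons
    by (rule eq_matI) (use M P in \<open>auto simp: algebra_simps mult_smult_distrib[OF M P] carrier_matD[OF P]\<close>)
qed

lemma poly_mat_diff:
  assumes M: "M \<in> carrier_mat n n"
  shows "poly_mat (p - q) M = poly_mat p M + (-1) \<cdot>\<^sub>m poly_mat q M"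
  using poly_mat_add[OF M, of p "-q"] poly_mat_smult[OF M, of "-1" q] by simp

lemma poly_mat_mult_eigenvector:
  fixes M :: "'a :: field mat"
  assumes M: "M \<in> carrier_mat n n" and ev: "eigenvector M v z"
  shows "poly_mat p M *\<^sub>v v = poly p z \<cdot>\<^sub>v v"
proof (induct p rule: pCons_induct)
  case 0
  then show ?case using M ev by (auto simp: eigenvector_def)
next
  case (pCons a p)
  have v: "v \<in> carrier_vec n" and Mv: "M *\<^sub>v v = z \<cdot>\<^sub>v v"
    using M ev by (auto simp: eigenvector_def)
  have P: "poly_mat p M \<in> carrier_mat n n" using M by auto
  have "poly_mat (pCons a p) M *\<^sub>v v = a \<cdot>\<^sub>v v + M *\<^sub>v (poly p z \<cdot>\<^sub>v v)"
    using M P v pCons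
    by (simp add: poly_mat_pCons add_mult_distrib_mat_vec[of _ n n] assoc_mult_mat_vec[of _ n n _ n]
        smult_one_mult_mat_vec)
  also have "M *\<^sub>v (poly p z \<cdot>\<^sub>v v) = poly p z \<cdot>\<^sub>v (z \<cdot>\<^sub>v v)"
    using M v Mv by (simp add: mult_mat_vec)
  also have "a \<cdot>\<^sub>v v + poly p z \<cdot>\<^sub>v (z \<cdot>\<^sub>v v) = poly (pCons a p) z \<cdot>\<^sub>v v"
    using v by (intro eq_vecI) (auto simp: algebra_simps)
  finally show ?case .
qed

lemma index_poly_mat_sum_monom:
  assumes M: "M \<in> carrier_mat n n" and i: "i < n" and j: "j < n"
  shows "poly_mat (\<Sum>k<D. monom (c k) k) M $$ (i, j) = (\<Sum>k<D. c k * poly_mat (monom 1 k) M $$ (i, j))"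
proof (induct D)
  case 0
  then show ?case using M i j by simp
next
  case (Suc D)
  have "poly_mat (monom (c D) D) M = c D \<cdot>\<^sub>m poly_mat (monom 1 D) M"
    using poly_mat_smult[OF M, of "c D" "monom 1 D"] by (simp add: smult_monom)
  then show ?case using Suc M i j by (simp add: poly_mat_add[OF M])
qed

text \<open>The \<open>n\<^sup>2 + 1\<close> matrices \<open>M\<^sup>k\<close>, \<open>k \<le> n\<^sup>2\<close>, flattened into the columns of a square
  matrix whose last row is zero, are linearly dependent.\<close>

lemma annihilator_exists:
  fixes M :: "'a :: field mat"
  assumes M: "M \<in> carrier_mat n n"
  shows "\<exists>q. q \<noteq> 0 \<and> poly_mat q M = 0\<^sub>m n n"
proof -
  define N where "N = n * n + 1"
  define B where "B = mat N N (\<lambda>(r, k). if r < n * n then poly_mat (monom 1 k) M $$ (r div n, r mod n) else 0)"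
  have B: "B \<in> carrier_mat N N" unfolding B_def by auto
  have "B = mat\<^sub>r N N (\<lambda>i. if i = N - 1 then 0\<^sub>v N else row B i)"
    by (rule eq_matI) (auto simp: B_def N_def)
  moreover have "det (mat\<^sub>r N N (\<lambda>i. if i = N - 1 then 0\<^sub>v N else row B i)) = 0"
    by (rule det_row_0) (use B in \<open>auto simp: N_def\<close>)
  ultimately obtain c where c: "c \<in> carrier_vec N" "c \<noteq> 0\<^sub>v N" "B *\<^sub>v c = 0\<^sub>v N"
    using det_0_iff_vec_prod_zero[OF B] by auto
  define q where "q = (\<Sum>k<N. monom (c $ k) k)"
  obtain k where k: "k < N" "c $ k \<noteq> 0" using c(1,2) by (metis carrier_vecD eq_vecI index_zero_vec)
  have "coeff q k = c $ k" using k unfolding q_def by (auto simp: coeff_sum coeff_monom)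
  then have "q \<noteq> 0" using k by auto
  moreover have "poly_mat q M = 0\<^sub>m n n"
  proof (rule eq_matI)
    fix i j assume "i < dim_row (0\<^sub>m n n :: 'a mat)" "j < dim_col (0\<^sub>m n n :: 'a mat)"
    then have i: "i < n" and j: "j < n" by auto
    have "i * n + j < (i + 1) * n" using j by simp
    also have "\<dots> \<le> n * n" using i by (intro mult_le_mono1) simp
    finally have r: "i * n + j < n * n" .
    have rN: "i * n + j < N" using r by (simp add: N_def)
    have "poly_mat q M $$ (i, j) = (\<Sum>k<N. c $ k * poly_mat (monom 1 k) M $$ (i, j))"
      unfolding q_def by (rule index_poly_mat_sum_monom[OF M i j])
    also have "\<dots> = (\<Sum>k<N. B $$ (i * n + j, k) * c $ k)"
      using r rN i j by (intro sum.cong) (auto simp: B_def mult.commute)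
    also have "\<dots> = (B *\<^sub>v c) $ (i * n + j)"
      using rN B c(1) by (auto simp: scalar_prod_def lessThan_atLeast0 intro: sum.cong)
    also have "\<dots> = 0" using c(3) rN by simp
    finally show "poly_mat q M $$ (i, j) = 0\<^sub>m n n $$ (i, j)" using i j by simp
  qed (use M in auto)
  ultimately show ?thesis by blast
qed

lemma minimal_poly:
  fixes M :: "'a :: field mat"
  assumes M: "M \<in> carrier_mat n n"
  shows "monic (minimal_poly M)" "poly_mat (minimal_poly M) M = 0\<^sub>m n n"
    "q \<noteq> 0 \<Longrightarrow> poly_mat q M = 0\<^sub>m n n \<Longrightarrow> degree (minimal_poly M) \<le> degree q"
proof -
  define P where "P p \<longleftrightarrow> monic p \<and> poly_mat p M = 0\<^sub>m n n \<and>
      (\<forall>q. q \<noteq> 0 \<longrightarrow> poly_mat q M = 0\<^sub>m n n \<longrightarrow> degree p \<le> degree q)" for p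
  obtain q1 where "q1 \<noteq> 0 \<and> poly_mat q1 M = 0\<^sub>m n n" using annihilator_exists[OF M] by blast
  then obtain q0 where q0: "q0 \<noteq> 0" "poly_mat q0 M = 0\<^sub>m n n"
    and q0_min: "\<And>q. q \<noteq> 0 \<Longrightarrow> poly_mat q M = 0\<^sub>m n n \<Longrightarrow> degree q0 \<le> degree q"
    using ex_has_least_nat[of "\<lambda>q. q \<noteq> 0 \<and> poly_mat q M = 0\<^sub>m n n" q1 degree] by blast
  have "P (Polynomial.smult (inverse (lead_coeff q0)) q0)"
    using q0 q0_min by (simp add: P_def lead_coeff_smult poly_mat_smult[OF M])
  moreover have "p = p'" if "P p" "P p'" for p p'
  proof (rule ccontr)
    assume "p \<noteq> p'"
    have "p \<noteq> 0" "p' \<noteq> 0" using that by (auto simp: P_def)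
    then have deg: "degree p = degree p'" using that unfolding P_def by (simp add: antisym)
    have "degree (p - p') < degree p"
      using that \<open>p \<noteq> p'\<close> deg unfolding P_def
      by (intro degree_less_if_less_eqI) (auto intro: degree_diff_le)
    moreover have "poly_mat (p - p') M = 0\<^sub>m n n"
      using that unfolding P_def by (simp add: poly_mat_diff[OF M])
    moreover have "p - p' \<noteq> 0" using \<open>p \<noteq> p'\<close> by simp
    ultimately show False using that(1) unfolding P_def by (meson not_le)
  qed
  ultimately have "P (THE p. P p)" by (metis theI)
  moreover have "minimal_poly M = (THE p. P p)" using M by (simp add: minimal_poly_def P_def)
  ultimately have "P (minimal_poly M)" by simp
  then show "monic (minimal_poly M)" "poly_mat (minimal_poly M) M = 0\<^sub>m n n"
    "q \<noteq> 0 \<Longrightarrow> poly_mat q M = 0\<^sub>m n n \<Longrightarrow> degree (minimal_poly M) \<le> degree q"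
    unfolding P_def by auto
qed

lemma poly_minimal_poly_eigenvalue:
  fixes M :: "'a :: field mat"
  assumes M: "M \<in> carrier_mat n n" and ev: "eigenvector M v z"
  shows "poly (minimal_poly M) z = 0"
proof -
  have v: "v \<in> carrier_vec n" "v \<noteq> 0\<^sub>v n" using M ev by (auto simp: eigenvector_def)
  then obtain i where i: "i < n" "v $ i \<noteq> 0" by (metis carrier_vecD eq_vecI index_zero_vec)
  have "poly (minimal_poly M) z \<cdot>\<^sub>v v = poly_mat (minimal_poly M) M *\<^sub>v v"
    by (rule poly_mat_mult_eigenvector[OF M ev, symmetric])
  also have "\<dots> = 0\<^sub>m n n *\<^sub>v v" by (simp add: minimal_poly(2)[OF M])
  finally have "poly (minimal_poly M) z \<cdot>\<^sub>v v = 0\<^sub>m n n *\<^sub>v v" .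
  then have "(poly (minimal_poly M) z \<cdot>\<^sub>v v) $ i = 0" using i v(1) by simp
  then show ?thesis using i v(1) by simp
qed

lemma mult_mat_eq_0_if_square_kernel:
  fixes M :: "'a :: comm_ring_1 mat"
  assumes M: "M \<in> carrier_mat n n" and Q: "Q \<in> carrier_mat n m"
    and ker: "\<And>y. y \<in> carrier_vec n \<Longrightarrow> M *\<^sub>v (M *\<^sub>v y) = 0\<^sub>v n \<Longrightarrow> M *\<^sub>v y = 0\<^sub>v n"
    and MMQ: "M * (M * Q) = 0\<^sub>m n m"
  shows "M * Q = 0\<^sub>m n m"
proof (rule mat_col_eqI)
  fix j assume "j < dim_col (0\<^sub>m n m :: 'a mat)"
  then have j: "j < m" by simp
  have "M *\<^sub>v (M *\<^sub>v col Q j) = col (M * (M * Q)) j"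
    using col_mult2[OF M Q j] col_mult2[OF M _ j, of "M * Q"] M Q by simp
  then have "M *\<^sub>v col Q j = 0\<^sub>v n" using ker Q j MMQ by simp
  then show "col (M * Q) j = col (0\<^sub>m n m) j" by (simp only: col_mult2[OF M Q j] col_zero[OF j])
qed (use M Q in auto)

lemma order_0_minimal_poly:
  fixes M :: "'a :: field mat"
  assumes M: "M \<in> carrier_mat n n" and ev: "eigenvalue M 0"
    and ker: "\<And>y. y \<in> carrier_vec n \<Longrightarrow> M *\<^sub>v (M *\<^sub>v y) = 0\<^sub>v n \<Longrightarrow> M *\<^sub>v y = 0\<^sub>v n"
  shows "Polynomial.order 0 (minimal_poly M) = 1"
proof -
  define m where "m = minimal_poly M"
  have m0: "m \<noteq> 0" using minimal_poly(1)[OF M] by (auto simp: m_def)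
  have "poly m 0 = 0"
    using ev poly_minimal_poly_eigenvalue[OF M] by (auto simp: eigenvalue_def m_def)
  then have "Polynomial.order 0 m > 0" using order_gt_0_iff[OF m0] by simp
  moreover have "\<not> Polynomial.order 0 m \<ge> 2"
  proof
    assume "Polynomial.order 0 m \<ge> 2"
    then obtain q where "m = [:0, 1:] ^ 2 * q" using order_divides[of 0 2 m] by auto
    then have mq: "m = pCons 0 (pCons 0 q)" by (simp add: power2_eq_square)
    have q0: "q \<noteq> 0" using m0 mq by auto
    have Q: "poly_mat q M \<in> carrier_mat n n" using M by simp
    have "M * (M * poly_mat q M) = 0\<^sub>m n n"
      using minimal_poly(2)[OF M] M by (simp add: m_def[symmetric] mq poly_mat_pCons_0)
    then have "poly_mat (pCons 0 q) M = 0\<^sub>m n n"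
      using mult_mat_eq_0_if_square_kernel[OF M Q ker] M by (simp add: poly_mat_pCons_0)
    then have "degree m \<le> degree (pCons 0 q)"
      using minimal_poly(3)[OF M, of "pCons 0 q"] q0 by (simp add: m_def)
    then show False using q0 by (simp add: mq)
  qed
  ultimately show ?thesis by (simp add: m_def)
qed

section \<open>Spectra of real matrices\<close>

lemma mult_mat_vec_uminus:
  fixes A :: "'a :: comm_ring_1 mat"
  assumes "A \<in> carrier_mat nr nc" "v \<in> carrier_vec nc"
  shows "A *\<^sub>v (- v) = - (A *\<^sub>v v)"
  using assms by (intro eq_vecI) auto

lemma map_vec_Re_Im_mult_of_real_mat:
  fixes N :: "real mat"
  assumes N: "N \<in> carrier_mat n n" and v: "v \<in> carrier_vec n"
  shows "map_vec Re (map_mat complex_of_real N *\<^sub>v v) = N *\<^sub>v map_vec Re v"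
    and "map_vec Im (map_mat complex_of_real N *\<^sub>v v) = N *\<^sub>v map_vec Im v"
  using N v by (auto intro!: eq_vecI simp: scalar_prod_def Re_sum Im_sum)

lemma complex_vec_eq_0_iff:
  fixes v :: "complex vec"
  assumes "v \<in> carrier_vec n"
  shows "v = 0\<^sub>v n \<longleftrightarrow> map_vec Re v = 0\<^sub>v n \<and> map_vec Im v = 0\<^sub>v n"
  using assms by (auto simp: vec_eq_iff complex_eq_iff)

lemma of_real_mat_square_kernel:
  fixes N :: "real mat"
  assumes N: "N \<in> carrier_mat n n"
    and ker: "\<And>x. x \<in> carrier_vec n \<Longrightarrow> N *\<^sub>v (N *\<^sub>v x) = 0\<^sub>v n \<Longrightarrow> N *\<^sub>v x = 0\<^sub>v n"
    and v: "v \<in> carrier_vec n"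
    and sq: "map_mat complex_of_real N *\<^sub>v (map_mat complex_of_real N *\<^sub>v v) = 0\<^sub>v n"
  shows "map_mat complex_of_real N *\<^sub>v v = 0\<^sub>v n"
proof -
  have Nv: "map_mat complex_of_real N *\<^sub>v v \<in> carrier_vec n" using N v by simp
  have "N *\<^sub>v (N *\<^sub>v map_vec f v) = 0\<^sub>v n" if "f = Re \<or> f = Im" for f
    using that sq complex_vec_eq_0_iff[of _ n] N v
      map_vec_Re_Im_mult_of_real_mat[OF N v] map_vec_Re_Im_mult_of_real_mat[OF N Nv]
    by auto
  then have "N *\<^sub>v map_vec f v = 0\<^sub>v n" if "f = Re \<or> f = Im" for f
    using that ker v by auto
  then show ?thesis
    using complex_vec_eq_0_iff[OF Nv] map_vec_Re_Im_mult_of_real_mat[OF N v] by auto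
qed

lemma of_real_mat_eigenvector_Re_Im:
  fixes N :: "real mat"
  assumes N: "N \<in> carrier_mat n n" and v: "v \<in> carrier_vec n"
    and Nv: "map_mat complex_of_real N *\<^sub>v v = z \<cdot>\<^sub>v v"
  shows "N *\<^sub>v map_vec Re v = Re z \<cdot>\<^sub>v map_vec Re v - Im z \<cdot>\<^sub>v map_vec Im v"
    and "N *\<^sub>v map_vec Im v = Im z \<cdot>\<^sub>v map_vec Re v + Re z \<cdot>\<^sub>v map_vec Im v"
proof -
  have "N *\<^sub>v map_vec Re v = map_vec Re (z \<cdot>\<^sub>v v)" "N *\<^sub>v map_vec Im v = map_vec Im (z \<cdot>\<^sub>v v)"
    using map_vec_Re_Im_mult_of_real_mat[OF N v] Nv by simp_all
  then show "N *\<^sub>v map_vec Re v = Re z \<cdot>\<^sub>v map_vec Re v - Im z \<cdot>\<^sub>v map_vec Im v"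
    and "N *\<^sub>v map_vec Im v = Im z \<cdot>\<^sub>v map_vec Re v + Re z \<cdot>\<^sub>v map_vec Im v"
    using v by (auto intro!: eq_vecI)
qed

lemma eigenvalue_of_real_uminus_psd:
  fixes P :: "real mat"
  assumes P: "P \<in> carrier_mat n n" and "psd P"
    and iso: "\<And>x. x \<in> carrier_vec n \<Longrightarrow> x \<bullet> (P *\<^sub>v x) = 0 \<Longrightarrow> P *\<^sub>v x = 0\<^sub>v n"
    and ev: "eigenvector (map_mat complex_of_real (- P)) v z"
  shows "Re z \<le> 0" and "Re z = 0 \<Longrightarrow> z = 0"
proof -
  define N where "N = - P"
  have N: "N \<in> carrier_mat n n" using P by (simp add: N_def)
  have v: "v \<in> carrier_vec n" "v \<noteq> 0\<^sub>v n"
    and Nv: "map_mat complex_of_real N *\<^sub>v v = z \<cdot>\<^sub>v v"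
    using ev P by (auto simp: eigenvector_def N_def)
  define a where "a = map_vec Re v"
  define b where "b = map_vec Im v"
  have a: "a \<in> carrier_vec n" and b: "b \<in> carrier_vec n" using v by (auto simp: a_def b_def)
  note Na = of_real_mat_eigenvector_Re_Im(1)[OF N v(1) Nv, folded a_def b_def]
  note Nb = of_real_mat_eigenvector_Re_Im(2)[OF N v(1) Nv, folded a_def b_def]
  have form: "x \<bullet> (N *\<^sub>v x) = - (x \<bullet> (P *\<^sub>v x))" if "x \<in> carrier_vec n" for x
    using that P by (simp add: N_def)
  have nonpos: "x \<bullet> (N *\<^sub>v x) \<le> 0" if "x \<in> carrier_vec n" for x
    using psd_quadratic_form_nonneg[OF \<open>psd P\<close> P that] form[OF that] by simp
  have sum: "a \<bullet> (N *\<^sub>v a) + b \<bullet> (N *\<^sub>v b) = Re z * (a \<bullet> a + b \<bullet> b)"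
    using a b unfolding Na Nb
    by (simp add: scalar_prod_minus_distrib scalar_prod_add_distrib[of _ n] comm_scalar_prod[of a n b]
        algebra_simps)
  have "a \<noteq> 0\<^sub>v n \<or> b \<noteq> 0\<^sub>v n" using complex_vec_eq_0_iff[OF v(1)] v(2) by (auto simp: a_def b_def)
  then have pos: "a \<bullet> a + b \<bullet> b > 0"
    using real_scalar_prod_self_eq_0_iff[OF a] real_scalar_prod_self_eq_0_iff[OF b]
      real_scalar_prod_self_nonneg[of a] real_scalar_prod_self_nonneg[of b] by fastforce
  have "Re z * (a \<bullet> a + b \<bullet> b) \<le> 0" using sum nonpos[OF a] nonpos[OF b] by linarith
  then show "Re z \<le> 0" using pos by (simp add: mult_le_0_iff)
  assume "Re z = 0"
  then have "a \<bullet> (N *\<^sub>v a) = 0" "b \<bullet> (N *\<^sub>v b) = 0"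
    using sum nonpos[OF a] nonpos[OF b] by auto
  then have "P *\<^sub>v a = 0\<^sub>v n" "P *\<^sub>v b = 0\<^sub>v n" using iso[OF a] iso[OF b] form a b by simp_all
  then have "N *\<^sub>v a = 0\<^sub>v n" "N *\<^sub>v b = 0\<^sub>v n" using a b P by (simp_all add: N_def)
  then have "b \<bullet> (N *\<^sub>v a) = 0" "a \<bullet> (N *\<^sub>v b) = 0" using a b by simp_all
  then have "Im z * (b \<bullet> b) = 0" "Im z * (a \<bullet> a) = 0"
    using a b \<open>Re z = 0\<close> unfolding Na Nb
    by (simp_all add: scalar_prod_minus_distrib scalar_prod_add_distrib[of _ n])
  then have "Im z * (a \<bullet> a + b \<bullet> b) = 0" by (simp only: distrib_left)
  then show "z = 0" using pos \<open>Re z = 0\<close> by (simp add: complex_eq_iff)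
qed

lemma marginally_stable_uminus_psd:
  fixes P :: "real mat"
  assumes P: "P \<in> carrier_mat n n" and "psd P"
    and iso: "\<And>x. x \<in> carrier_vec n \<Longrightarrow> x \<bullet> (P *\<^sub>v x) = 0 \<Longrightarrow> P *\<^sub>v x = 0\<^sub>v n"
  shows "marginally_stable (- P)"
proof -
  define Mc where "Mc = map_mat complex_of_real (- P)"
  have Mc: "Mc \<in> carrier_mat n n" using P by (simp add: Mc_def)
  have "- P *\<^sub>v (- P *\<^sub>v x) = 0\<^sub>v n \<Longrightarrow> - P *\<^sub>v x = 0\<^sub>v n" if x: "x \<in> carrier_vec n" for x
    using psd_mult_mat_vec_eq_0_if_square[OF P \<open>psd P\<close> x] P x
    by (simp add: mult_mat_vec_uminus[OF P])
  then have ker: "Mc *\<^sub>v (Mc *\<^sub>v y) = 0\<^sub>v n \<Longrightarrow> Mc *\<^sub>v y = 0\<^sub>v n" if "y \<in> carrier_vec n" for y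
    using of_real_mat_square_kernel[of "- P" n y] P that unfolding Mc_def by (meson uminus_carrier_iff_mat)
  have "Re z \<le> 0 \<and> (Re z = 0 \<longrightarrow> z = 0)" if ev: "eigenvalue Mc z" for z
  proof -
    obtain v where "eigenvector (map_mat complex_of_real (- P)) v z"
      using ev unfolding eigenvalue_def Mc_def by blast
    then show ?thesis using eigenvalue_of_real_uminus_psd[OF P \<open>psd P\<close> iso] by blast
  qed
  moreover have "Polynomial.order 0 (minimal_poly Mc) = 1" if "eigenvalue Mc 0"
    using order_0_minimal_poly[OF Mc that ker] by blast
  ultimately show ?thesis
    unfolding marginally_stable_def Let_def Mc_def[symmetric] by blast
qed

section \<open>Signed Laplacians\<close>

lemma ones_vec_carrier[simp]: "ones_vec n \<in> carrier_vec n"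
  and dim_ones_vec[simp]: "dim_vec (ones_vec n) = n"
  and index_ones_vec[simp]: "i < n \<Longrightarrow> ones_vec n $ i = 1"
  unfolding ones_vec_def by auto

lemma ones_vec_neq_0: "n \<noteq> 0 \<Longrightarrow> (ones_vec n :: 'a :: zero_neq_one vec) \<noteq> 0\<^sub>v n"
  by (metis index_ones_vec index_zero_vec(1) neq0_conv zero_neq_one)

lemma signed_laplacian_carrier[simp]:
  "A \<in> carrier_mat n n \<Longrightarrow> signed_laplacian A \<in> carrier_mat n n"
  unfolding signed_laplacian_def by auto

lemma signed_laplacian_mult_ones:
  assumes A: "A \<in> carrier_mat n n"
  shows "signed_laplacian A *\<^sub>v ones_vec n = 0\<^sub>v n"
proof (rule eq_vecI)
  fix i assume "i < dim_vec (0\<^sub>v n :: real vec)"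
  then have i: "i < n" by simp
  have "(signed_laplacian A *\<^sub>v ones_vec n) $ i =
      (\<Sum>j<n. (if i = j then (\<Sum>k<n. A $$ (i, k)) else 0) - A $$ (i, j))"
    using A i by (auto simp: signed_laplacian_def scalar_prod_def lessThan_atLeast0 intro!: sum.cong)
  also have "\<dots> = 0" using i by (simp add: sum_subtractf)
  finally show "(signed_laplacian A *\<^sub>v ones_vec n) $ i = 0\<^sub>v n $ i" using i by simp
qed (use A in \<open>simp add: signed_laplacian_def\<close>)

theorem corollary2:
  fixes A :: "real mat" and n :: nat
  assumes "A \<in> carrier_mat n n"
    and "psd ((1/2) \<cdot>\<^sub>m (signed_laplacian A + transpose_mat (signed_laplacian A)))"
    and "corank ((1/2) \<cdot>\<^sub>m (signed_laplacian A + transpose_mat (signed_laplacian A))) = 1"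
  shows "transpose_mat (signed_laplacian A) *\<^sub>v ones_vec n = 0\<^sub>v n \<and>
         marginally_stable (- signed_laplacian A) \<and>
         corank (- signed_laplacian A) = 1"
proof -
  define L where "L = signed_laplacian A"
  have L: "L \<in> carrier_mat n n" using assms(1) by (simp add: L_def)
  have psd: "psd (symmetric_part L)" and corank: "kernel_dim (symmetric_part L) = 1"
    using assms(2,3) by (simp_all add: L_def symmetric_part_def corank_def)
  have "n \<noteq> 0" using corank kernel_dim_carrier_0[of "symmetric_part L"] L by (cases "n = 0") simp_all
  note corank_1_hyps = L ones_vec_carrier ones_vec_neq_0[OF \<open>n \<noteq> 0\<close>]
    signed_laplacian_mult_ones[OF assms(1), folded L_def] psd corank
  have "transpose_mat L *\<^sub>v ones_vec n = 0\<^sub>v n"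
    by (rule transpose_mult_mat_vec_eq_0[OF corank_1_hyps])
  moreover have "marginally_stable (- L)"
    using marginally_stable_uminus_psd[OF L _ isotropic_imp_mult_mat_vec_eq_0[OF corank_1_hyps]]
      psd psd_symmetric_part_iff[OF L] by blast
  moreover have "corank (- L) = 1"
    using kernel_dim_eq_if_mat_kernel_eq[of "- L" n n "symmetric_part L" n] L corank
      mat_kernel_uminus[OF L] mat_kernel_eq_mat_kernel_symmetric_part[OF corank_1_hyps]
    by (simp add: corank_def)
  ultimately show ?thesis by (simp add: L_def)
qed

end
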